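(* Let $A$ and $B$ be C$^*$-algebras, where $A$ is unital with unit $1$. Let $T:A\to B$ be a linear map which is a $^*$-homomorphism at $1$. Then $T$ is a Jordan $^*$-homomorphism.
   Context: A map $T:A\to B$ between C$^*$-algebras is a $^*$-homomorphism at $z\in A$ if for all $a,b\in A$ with $ab^*=z$ one has $T(ab^* )=T(a)T(b)^*=T(z)$, and for all $c,d\in A$ with $c^*d=z$ one has $T(c^*d)=T(c)^*T(d)=T(z)$. A Jordan $^*$-homomorphism is a linear map $T$ with $T(a\circ b)=T(a)\circ T(b)$ for all $a,b$, where $a\circ b=\frac12(ab+ba)$, and $T(x^* )=T(x)^*$ for all $x$. *)

theory Defs
  imports "HOL-Analysis.Analysis"
begin

text \<open>A C*-algebra is modelled on a type 'a that is a (real) Banach algebra,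
 together with an explicit complex scalar multiplication sc (extending the real
 one) and an involution st satisfying the C*-identity.\<close>

definition cstar_algebra ::
  "(complex \<Rightarrow> 'a::{real_normed_algebra,banach} \<Rightarrow> 'a) \<Rightarrow> ('a \<Rightarrow> 'a) \<Rightarrow> bool" where
  "cstar_algebra sc st \<longleftrightarrow>
     (\<forall>r x. sc (complex_of_real r) x = r *\<^sub>R x) \<and>
     (\<forall>a x y. sc a (x + y) = sc a x + sc a y) \<and>
     (\<forall>a b x. sc (a + b) x = sc a x + sc b x) \<and>
     (\<forall>a b x. sc (a * b) x = sc a (sc b x)) \<and>
     (\<forall>a x y. sc a (x * y) = sc a x * y) \<and>
     (\<forall>a x y. sc a (x * y) = x * sc a y) \<and>
     (\<forall>a x. norm (sc a x) = cmod a * norm x) \<and>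
     (\<forall>x y. st (x + y) = st x + st y) \<and>
     (\<forall>a x. st (sc a x) = sc (cnj a) (st x)) \<and>
     (\<forall>x y. st (x * y) = st y * st x) \<and>
     (\<forall>x. st (st x) = x) \<and>
     (\<forall>x. norm (st x * x) = (norm x)\<^sup>2)"

definition clinear_map ::
  "(complex \<Rightarrow> 'a \<Rightarrow> 'a) \<Rightarrow> (complex \<Rightarrow> 'b \<Rightarrow> 'b) \<Rightarrow> ('a::plus \<Rightarrow> 'b::plus) \<Rightarrow> bool" where
  "clinear_map scA scB T \<longleftrightarrow>
     (\<forall>x y. T (x + y) = T x + T y) \<and> (\<forall>a x. T (scA a x) = scB a (T x))"

definition star_hom_at ::
  "('a \<Rightarrow> 'a) \<Rightarrow> ('b \<Rightarrow> 'b) \<Rightarrow> ('a::times \<Rightarrow> 'b::times) \<Rightarrow> 'a \<Rightarrow> bool" where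
  "star_hom_at stA stB T z \<longleftrightarrow>
     (\<forall>a b. a * stA b = z \<longrightarrow> T (a * stA b) = T a * stB (T b) \<and> T a * stB (T b) = T z) \<and>
     (\<forall>c d. stA c * d = z \<longrightarrow> T (stA c * d) = stB (T c) * T d \<and> stB (T c) * T d = T z)"

definition jordan_prod :: "'a::{times,plus,scaleR} \<Rightarrow> 'a \<Rightarrow> 'a" where
  "jordan_prod a b = (1/2::real) *\<^sub>R (a * b + b * a)"

definition jordan_star_hom ::
  "(complex \<Rightarrow> 'a \<Rightarrow> 'a) \<Rightarrow> ('a \<Rightarrow> 'a) \<Rightarrow> (complex \<Rightarrow> 'b \<Rightarrow> 'b) \<Rightarrow> ('b \<Rightarrow> 'b)
   \<Rightarrow> ('a::{times,plus,scaleR} \<Rightarrow> 'b::{times,plus,scaleR}) \<Rightarrow> bool" where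
  "jordan_star_hom scA stA scB stB T \<longleftrightarrow>
     clinear_map scA scB T \<and>
     (\<forall>a b. T (jordan_prod a b) = jordan_prod (T a) (T b)) \<and>
     (\<forall>x. T (stA x) = stB (T x))"

end

theory Submission
  imports Defs "HOL-Computational_Algebra.Formal_Power_Series"
begin

text \<open>
  Let \<open>p = T 1\<close>. The hypothesis says that \<open>T a \<cdot> (T b)\<^sup>* = p\<close> whenever \<open>a b\<^sup>* = 1\<close>, and dually.
  For a unitary \<open>u\<close> this makes \<open>T u\<close> a partial isometry with initial and final projection \<open>p\<close>,
  so \<open>T u\<close> lies in the corner \<open>p B p\<close> and has norm at most 1. Since every self-adjoint
  element of norm less than 1 is the mean of a unitary and its adjoint
  (\<open>u = h + i \<surd>(1 - h\<^sup>2)\<close>), the map \<open>T\<close> is bounded and takes values in \<open>p B p\<close>.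

  Now write \<open>S x = T(x\<^sup>*)\<^sup>*\<close> and apply the hypothesis to \<open>a = 1 - t x\<close>, \<open>b = ((1 - t x)\<^sup>-\<^sup>1)\<^sup>*\<close>.
  Expanding the Neumann series of \<open>(1 - t x)\<^sup>-\<^sup>1\<close> gives
  \<open>t (S x - T x) + t\<^sup>2 (S (x\<^sup>2) - T x \<cdot> S x) = O(t\<^sup>3)\<close> as \<open>t \<rightarrow> 0\<close>,
  so both coefficients vanish. Hence \<open>T\<close> commutes with the involution and preserves squares,
  and polarisation yields the Jordan identity.
\<close>

lemma norm_power_le_of_norm_one_le:
  fixes y :: "'a::{real_normed_algebra,ring_1}"
  assumes "norm (1::'a) \<le> 1"
  shows "norm (y ^ n) \<le> norm y ^ n"
proof (induction n)
  case (Suc n)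
  have "norm (y ^ Suc n) \<le> norm y * norm (y ^ n)" by (simp add: norm_mult_ineq)
  also have "\<dots> \<le> norm y * norm y ^ n" by (simp add: Suc mult_left_mono)
  finally show ?case by simp
qed (simp add: assms)

lemma
  fixes y :: "'a::{real_normed_algebra,ring_1,banach}"
  assumes one: "norm (1::'a) \<le> 1" and y: "norm y < 1"
  shows geometric_series_right_inverse: "(1 - y) * (\<Sum>n. y ^ n) = 1"
    and norm_geometric_series_le: "norm (\<Sum>n. y ^ n) \<le> 1 / (1 - norm y)"
proof -
  note power_le = norm_power_le_of_norm_one_le[OF one]
  have geometric: "summable (\<lambda>n. norm y ^ n)" using y by (simp add: summable_geometric)
  have norms: "summable (\<lambda>n. norm (y ^ n))"
    by (rule summable_comparison_test[OF _ geometric]) (auto intro: power_le)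
  have "(\<lambda>n. y ^ n) \<longlonglongrightarrow> 0"
    by (rule Lim_null_comparison[OF _ LIMSEQ_power_zero[of "norm y"]])
      (use y power_le in \<open>auto intro!: always_eventually\<close>)
  from telescope_sums'[OF this] have "(\<lambda>n. (1 - y) * y ^ n) sums 1"
    by (simp add: left_diff_distrib)
  moreover have "(\<lambda>n. (1 - y) * y ^ n) sums ((1 - y) * (\<Sum>n. y ^ n))"
    using summable_norm_cancel[OF norms] by (intro sums_mult summable_sums)
  ultimately show "(1 - y) * (\<Sum>n. y ^ n) = 1" by (rule sums_unique2[symmetric])
  have "norm (\<Sum>n. y ^ n) \<le> (\<Sum>n. norm (y ^ n))" using norms by (rule summable_norm)
  also have "\<dots> \<le> (\<Sum>n. norm y ^ n)" using norms geometric by (intro suminf_le power_le)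
  also have "\<dots> = 1 / (1 - norm y)" using y by (simp add: suminf_geometric)
  finally show "norm (\<Sum>n. y ^ n) \<le> 1 / (1 - norm y)" .
qed

text \<open>The Taylor coefficients of \<open>\<surd>(1 - z) = (1 - z) powr (1/2)\<close>.\<close>
definition sqrt_coeff :: "nat \<Rightarrow> real" where
  "sqrt_coeff n = (-1) ^ n * ((1/2) gchoose n)"

definition sqrt_one_minus :: "'a::{real_normed_algebra,ring_1} \<Rightarrow> 'a" where
  "sqrt_one_minus y = (\<Sum>n. sqrt_coeff n *\<^sub>R y ^ n)"

lemma abs_gbinomial_half_le: "\<bar>(1/2::real) gchoose n\<bar> \<le> 1"
proof (induction n)
  case (Suc k)
  have "real (Suc k) * ((1/2::real) gchoose Suc k) = (1/2 - real k) * ((1/2) gchoose k)"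
    using gbinomial_absorption[of k "1/2::real"] gbinomial_absorb_comp[of "1/2::real" k] by simp
  then have "real (Suc k) * \<bar>(1/2::real) gchoose Suc k\<bar> = \<bar>1/2 - real k\<bar> * \<bar>(1/2) gchoose k\<bar>"
    by (metis abs_mult abs_of_nat)
  also have "\<dots> \<le> real (Suc k) * 1" using Suc by (intro mult_mono) auto
  finally show ?case by (simp del: of_nat_Suc)
qed simp

lemma abs_sqrt_coeff_le: "\<bar>sqrt_coeff n\<bar> \<le> 1"
  by (simp add: sqrt_coeff_def abs_mult abs_gbinomial_half_le)

lemma sqrt_coeff_convolution:
  "(\<Sum>i\<le>k. sqrt_coeff i * sqrt_coeff (k - i)) = (if k = 0 then 1 else if k = 1 then -1 else 0)"
proof -
  have "(\<Sum>i\<le>k. sqrt_coeff i * sqrt_coeff (k - i))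
      = (\<Sum>i\<in>{0..k}. (-1) ^ k * (((1/2::real) gchoose i) * ((1/2) gchoose (k - i))))"
    unfolding atLeast0AtMost[symmetric] sqrt_coeff_def
    by (intro sum.cong refl) (simp add: power_add[symmetric] mult_ac)
  also have "\<dots> = (-1) ^ k * ((1/2 + 1/2::real) gchoose k)"
    by (simp only: sum_distrib_left[symmetric] gbinomial_Vandermonde)
  also have "\<dots> = (-1) ^ k * real (1 choose k)"
    by (metis binomial_gbinomial of_nat_1 field_sum_of_halves)
  finally show ?thesis by (cases k) (auto simp: binomial_eq_0)
qed

lemma
  fixes y :: "'a::{real_normed_algebra,ring_1,banach}"
  assumes one: "norm (1::'a) \<le> 1" and y: "norm y < 1"
  shows summable_norm_sqrt_one_minus: "summable (\<lambda>n. norm (sqrt_coeff n *\<^sub>R y ^ n))"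
    and sqrt_one_minus_square: "sqrt_one_minus y * sqrt_one_minus y = 1 - y"
proof -
  define a where "a n = sqrt_coeff n *\<^sub>R y ^ n" for n
  have "norm (a n) \<le> norm y ^ n" for n
  proof -
    have "norm (a n) = \<bar>sqrt_coeff n\<bar> * norm (y ^ n)" by (simp add: a_def)
    also have "\<dots> \<le> 1 * norm y ^ n"
      using abs_sqrt_coeff_le norm_power_le_of_norm_one_le[OF one] by (intro mult_mono) auto
    finally show ?thesis by simp
  qed
  then show norms: "summable (\<lambda>n. norm (sqrt_coeff n *\<^sub>R y ^ n))"
    unfolding a_def[symmetric] using y
    by (intro summable_comparison_test[OF _ summable_geometric[of "norm y"]]) auto
  have "(\<Sum>i\<le>n. a i * a (n - i)) = (if n = 0 then 1 else if n = 1 then - y else 0)" for n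
  proof -
    have "(\<Sum>i\<le>n. a i * a (n - i)) = (\<Sum>i\<le>n. sqrt_coeff i * sqrt_coeff (n - i)) *\<^sub>R y ^ n"
      unfolding scaleR_sum_left
      by (intro sum.cong refl) (auto simp: a_def power_add[symmetric])
    then show ?thesis by (simp add: sqrt_coeff_convolution)
  qed
  then have "(\<lambda>n. if n = 0 then 1 else if n = 1 then - y else 0) sums (sqrt_one_minus y * sqrt_one_minus y)"
    using Cauchy_product_sums[OF norms norms] by (simp add: a_def sqrt_one_minus_def)
  moreover have "(\<lambda>n. if n = 0 then 1 else if n = 1 then - y else 0) sums (1 - y)"
    using sums_finite[of "{0, 1}" "\<lambda>n. if n = 0 then 1 else if n = 1 then - y else 0"] by simp
  ultimately show "sqrt_one_minus y * sqrt_one_minus y = 1 - y" by (rule sums_unique2)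
qed

lemma sqrt_one_minus_commute:
  fixes y :: "'a::{real_normed_algebra,ring_1,banach}"
  assumes "norm (1::'a) \<le> 1" "norm y < 1" and comm: "h * y = y * h"
  shows "h * sqrt_one_minus y = sqrt_one_minus y * h"
proof -
  have summable: "summable (\<lambda>n. sqrt_coeff n *\<^sub>R y ^ n)"
    using summable_norm_sqrt_one_minus[OF assms(1,2)] by (rule summable_norm_cancel)
  have "h * y ^ n = y ^ n * h" for n
    using power_commuting_commutes[OF comm[symmetric]] by simp
  then have commutes: "h * (sqrt_coeff n *\<^sub>R y ^ n) = (sqrt_coeff n *\<^sub>R y ^ n) * h" for n
    by simp
  show ?thesis
    unfolding sqrt_one_minus_def
    by (simp only: suminf_mult[OF summable, symmetric] suminf_mult2[OF summable] commutes)
qed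

locale cstar =
  fixes sc :: "complex \<Rightarrow> 'a::{real_normed_algebra,banach} \<Rightarrow> 'a" and st :: "'a \<Rightarrow> 'a"
  assumes cstar_algebra: "cstar_algebra sc st"
begin

lemma sc_of_real: "sc (complex_of_real r) x = r *\<^sub>R x"
  and sc_add_right: "sc a (x + y) = sc a x + sc a y"
  and sc_add_left: "sc (a + b) x = sc a x + sc b x"
  and sc_sc: "sc (a * b) x = sc a (sc b x)"
  and sc_mult_left: "sc a (x * y) = sc a x * y"
  and sc_mult_right: "sc a (x * y) = x * sc a y"
  and norm_sc: "norm (sc a x) = cmod a * norm x"
  and st_add: "st (x + y) = st x + st y"
  and st_sc: "st (sc a x) = sc (cnj a) (st x)"
  and st_mult: "st (x * y) = st y * st x"
  and st_st [simp]: "st (st x) = x"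
  and norm_st_mult_self: "norm (st x * x) = (norm x)\<^sup>2"
  using cstar_algebra unfolding cstar_algebra_def by fast+

lemma sc_one [simp]: "sc 1 x = x"
  using sc_of_real[of 1 x] by simp

lemma sc_zero [simp]: "sc 0 x = 0"
  using sc_of_real[of 0 x] by simp

lemma sc_minus_left: "sc (- a) x = - sc a x"
  using sc_add_left[of "- a" a x] by (simp add: eq_neg_iff_add_eq_0)

lemma sc_diff_right: "sc a (x - y) = sc a x - sc a y"
  by (metis sc_add_right eq_diff_eq)

lemma sc_scaleR: "sc a (r *\<^sub>R x) = r *\<^sub>R sc a x"
  by (metis sc_of_real sc_sc mult.commute)

lemma st_scaleR: "st (r *\<^sub>R x) = r *\<^sub>R st x"
  using st_sc[of "complex_of_real r" x] by (simp add: sc_of_real)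

lemma st_zero [simp]: "st 0 = 0"
  using st_scaleR[of 0 0] by simp

lemma st_diff: "st (x - y) = st x - st y"
  using st_add[of "x - y" y] by simp

lemma st_eq_zero_iff [simp]: "st x = 0 \<longleftrightarrow> x = 0"
  by (metis st_st st_zero)

lemma norm_st [simp]: "norm (st x) = norm x"
proof -
  have "norm x \<le> norm (st x)" for x
  proof (cases "x = 0")
    case False
    have "(norm x)\<^sup>2 \<le> norm (st x) * norm x"
      using norm_st_mult_self[of x] norm_mult_ineq[of "st x" x] by simp
    then show ?thesis using False by (simp add: power2_eq_square)
  qed simp
  from this[of x] this[of "st x"] show ?thesis by simp
qed

lemma mult_st_self_eq_zero_iff: "x * st x = 0 \<longleftrightarrow> x = 0"
  using norm_st_mult_self[of "st x"] by auto

lemma bounded_linear_st: "bounded_linear st"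
  by (rule bounded_linear_intro[where K=1]) (auto simp: st_add st_scaleR)

lemma norm_projection_le:
  assumes "st p = p" "p * p = p"
  shows "norm p \<le> 1"
proof -
  have "norm p = (norm p)\<^sup>2" using norm_st_mult_self[of p] assms by simp
  then show ?thesis by (cases "norm p \<le> 1") (auto simp: power2_eq_square)
qed

lemma partial_isometry_corner:
  assumes p: "st p = p" "p * p = p" and U: "U * st U = p" "st U * U = p"
  shows "p * U = U" "U * p = U" "norm U \<le> 1"
proof -
  have "(U - p * U) * st (U - p * U) = U * st U - (U * st U) * p - p * (U * st U) + p * (U * st U) * p"
    by (simp add: st_diff st_mult p(1) algebra_simps)
  also have "\<dots> = 0" by (simp add: U(1) p(2))
  finally show pU: "p * U = U" by (simp add: mult_st_self_eq_zero_iff)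
  have "p * U = U * p"
    by (metis U mult.assoc)
  with pU show "U * p = U" by simp
  have "(norm U)\<^sup>2 \<le> 1"
    using norm_st_mult_self[of "st U"] norm_projection_le[OF p] U(1) by simp
  then show "norm U \<le> 1" by (simp add: power_le_one_iff abs_le_iff)
qed

lemma cartesian_decomposition:
  obtains h k where "st h = h" "st k = k" "x = h + sc \<i> k" "norm h \<le> norm x" "norm k \<le> norm x"
proof
  define h where "h = (1/2) *\<^sub>R (x + st x)"
  define k where "k = (1/2) *\<^sub>R sc (- \<i>) (x - st x)"
  show "st h = h" by (simp add: h_def st_scaleR st_add add.commute)
  show "st k = k"
    by (simp add: k_def st_scaleR st_sc st_diff sc_minus_left sc_diff_right)
  have "sc \<i> k = (1/2) *\<^sub>R (x - st x)"
    by (simp add: k_def sc_scaleR flip: sc_sc)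
  then show "x = h + sc \<i> k"
    by (simp add: h_def scaleR_add_right[symmetric] flip: scaleR_2)
  show "norm h \<le> norm x"
    using norm_triangle_ineq[of x "st x"] by (simp add: h_def)
  show "norm k \<le> norm x"
    using norm_triangle_ineq4[of x "st x"] by (simp add: k_def norm_sc)
qed

end

locale unital_cstar = cstar sc st
  for sc :: "complex \<Rightarrow> 'a::{real_normed_algebra,ring_1,banach} \<Rightarrow> 'a" and st
begin

lemma st_one [simp]: "st 1 = 1"
  using st_mult[of "st 1" 1] by simp

lemma norm_one_le: "norm (1::'a) \<le> 1"
  using norm_projection_le[of 1] by simp

definition unitary :: "'a \<Rightarrow> bool" where
  "unitary u \<longleftrightarrow> u * st u = 1 \<and> st u * u = 1"

lemma unitary_st: "unitary u \<Longrightarrow> unitary (st u)"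
  by (simp add: unitary_def)

lemma unitary_one: "unitary 1"
  by (simp add: unitary_def)

lemma st_sqrt_one_minus:
  assumes "norm y < 1" "st y = y"
  shows "st (sqrt_one_minus y) = sqrt_one_minus y"
proof -
  have "summable (\<lambda>n. sqrt_coeff n *\<^sub>R y ^ n)"
    using summable_norm_sqrt_one_minus[OF norm_one_le assms(1)] by (rule summable_norm_cancel)
  moreover have "st (y ^ n) = y ^ n" for n
    by (induction n) (simp_all add: st_mult assms(2) power_commutes)
  ultimately show ?thesis
    unfolding sqrt_one_minus_def by (simp add: bounded_linear.suminf[OF bounded_linear_st] st_scaleR)
qed

text \<open>The unitary is \<open>u = h + i \<surd>(1 - h\<^sup>2)\<close>.\<close>
lemma selfadjoint_unitary_mean:
  assumes h: "st h = h" "norm h < 1"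
  obtains u where "unitary u" "h = (1/2) *\<^sub>R (u + st u)"
proof
  have "norm (h * h) \<le> norm h * norm h" by (rule norm_mult_ineq)
  also have "\<dots> < 1" using mult_strict_mono[OF h(2) h(2)] by simp
  finally have hh: "norm (h * h) < 1" .
  define k where "k = sqrt_one_minus (h * h)"
  have kk: "k * k = 1 - h * h"
    unfolding k_def using norm_one_le hh by (rule sqrt_one_minus_square)
  have sk: "st k = k"
    unfolding k_def using hh by (rule st_sqrt_one_minus) (simp add: st_mult h(1))
  have hk: "h * k = k * h"
    unfolding k_def using norm_one_le hh by (rule sqrt_one_minus_commute) (simp add: mult.assoc)
  define u where "u = h + sc \<i> k"
  have su: "st u = h + sc (- \<i>) k" by (simp add: u_def st_add st_sc sk h(1))
  have cancel: "sc (- \<i>) z + sc \<i> z = 0" for z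
    by (metis sc_add_left add.left_inverse sc_zero)
  have ii: "sc \<i> (sc (- \<i>) z) = z" "sc (- \<i>) (sc \<i> z) = z" for z
    by (simp_all flip: sc_sc)
  have "u * st u = h * h + sc \<i> k * h + (h * sc (- \<i>) k + sc \<i> k * sc (- \<i>) k)"
    unfolding su unfolding u_def by (simp only: distrib_left distrib_right)
  also have "\<dots> = h * h + k * k + (sc (- \<i>) (h * k) + sc \<i> (h * k))"
    by (simp only: sc_mult_right[symmetric] sc_mult_left[symmetric] ii hk add_ac)
  finally have "u * st u = 1" by (simp add: cancel kk)
  moreover have "st u * u = h * h + sc (- \<i>) k * h + (h * sc \<i> k + sc (- \<i>) k * sc \<i> k)"
    unfolding su unfolding u_def by (simp only: distrib_left distrib_right)
  moreover have "\<dots> = h * h + k * k + (sc (- \<i>) (h * k) + sc \<i> (h * k))"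
    by (simp only: sc_mult_right[symmetric] sc_mult_left[symmetric] ii hk add_ac)
  ultimately show "unitary u" by (simp add: unitary_def cancel kk)
  have "u + st u = h + h + (sc (- \<i>) k + sc \<i> k)"
    unfolding su unfolding u_def by (simp only: add_ac)
  then have "u + st u = 2 *\<^sub>R h" by (simp add: cancel scaleR_2)
  then show "h = (1/2) *\<^sub>R (u + st u)" by simp
qed

lemma selfadjoint_eq_norm_scaleR_unitary_sum:
  assumes "st h = h"
  obtains u where "unitary u" "h = norm h *\<^sub>R (u + st u)"
proof (cases "h = 0")
  case True
  with unitary_one that show ?thesis by simp
next
  case False
  define g where "g = (1 / (2 * norm h)) *\<^sub>R h"
  have "st g = g" "norm g < 1" using assms False by (simp_all add: g_def st_scaleR)
  then obtain u where "unitary u" "g = (1/2) *\<^sub>R (u + st u)" by (rule selfadjoint_unitary_mean)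
  moreover have "h = (2 * norm h) *\<^sub>R g" using False by (simp add: g_def)
  ultimately show ?thesis using that by simp
qed

end

lemma eq_zero_of_norm_le_tendsto_zero:
  fixes c :: "'v::real_normed_vector" and f :: "real \<Rightarrow> real"
  assumes "0 < d" and bound: "\<And>t. 0 < t \<Longrightarrow> t \<le> d \<Longrightarrow> norm c \<le> f t"
    and f: "(f \<longlongrightarrow> 0) (at_right 0)"
  shows "c = 0"
proof -
  have "eventually (\<lambda>t. norm c \<le> f t) (at_right 0)"
    unfolding eventually_at_right_field using \<open>0 < d\<close> bound by force
  with f have "norm c \<le> 0" by (rule tendsto_lowerbound) simp
  then show ?thesis by simp
qed

lemma coefficients_eq_zero_of_cubic_bound:
  fixes a b :: "'v::real_normed_vector"
  assumes "0 < d" and bound: "\<And>t. 0 < t \<Longrightarrow> t \<le> d \<Longrightarrow> norm (t *\<^sub>R a + t\<^sup>2 *\<^sub>R b) \<le> K * t ^ 3"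
  shows "a = 0" "b = 0"
proof -
  have "norm a \<le> K * t\<^sup>2 + t * norm b" if t: "0 < t" "t \<le> d" for t
  proof -
    have "t * norm a = norm ((t *\<^sub>R a + t\<^sup>2 *\<^sub>R b) - t\<^sup>2 *\<^sub>R b)" using t by simp
    also have "\<dots> \<le> K * t ^ 3 + t\<^sup>2 * norm b"
      using norm_triangle_ineq4[of "t *\<^sub>R a + t\<^sup>2 *\<^sub>R b" "t\<^sup>2 *\<^sub>R b"] bound[OF t] by simp
    also have "\<dots> = t * (K * t\<^sup>2 + t * norm b)" by (simp add: power2_eq_square power3_eq_cube algebra_simps)
    finally show ?thesis using t by simp
  qed
  then show a: "a = 0"
    by (rule eq_zero_of_norm_le_tendsto_zero[OF \<open>0 < d\<close>]) (auto intro!: tendsto_eq_intros)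
  have "norm b \<le> K * t" if t: "0 < t" "t \<le> d" for t
  proof -
    have "t\<^sup>2 * norm b \<le> t\<^sup>2 * (K * t)"
      using bound[OF t] t by (simp add: a power3_eq_cube power2_eq_square mult.assoc)
    then show ?thesis using t by simp
  qed
  then show "b = 0"
    by (rule eq_zero_of_norm_le_tendsto_zero[OF \<open>0 < d\<close>]) (auto intro!: tendsto_eq_intros)
qed

locale star_hom_at_one = A: unital_cstar scA stA + B: cstar scB stB
  for scA :: "complex \<Rightarrow> 'a::{real_normed_algebra,ring_1,banach} \<Rightarrow> 'a" and stA
    and scB :: "complex \<Rightarrow> 'b::{real_normed_algebra,banach} \<Rightarrow> 'b" and stB +
  fixes T :: "'a \<Rightarrow> 'b"
  assumes clinear: "clinear_map scA scB T" and star_hom_one: "star_hom_at stA stB T 1"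
begin

lemma T_add: "T (x + y) = T x + T y"
  using clinear unfolding clinear_map_def by fast

lemma T_sc: "T (scA a x) = scB a (T x)"
  using clinear unfolding clinear_map_def by fast

lemma T_scaleR: "T (r *\<^sub>R x) = r *\<^sub>R T x"
  using T_sc[of "complex_of_real r" x] by (simp add: A.sc_of_real B.sc_of_real)

lemma T_diff: "T (x - y) = T x - T y"
  by (metis T_add eq_diff_eq)

lemma T_mult_st_T_eq_T_one: "a * stA b = 1 \<Longrightarrow> T a * stB (T b) = T 1"
  using star_hom_one unfolding star_hom_at_def by metis

lemma st_T_mult_T_eq_T_one: "stA c * d = 1 \<Longrightarrow> stB (T c) * T d = T 1"
  using star_hom_one unfolding star_hom_at_def by metis

lemma st_T_one: "stB (T 1) = T 1"
proof -
  have "T 1 * stB (T 1) = T 1" using T_mult_st_T_eq_T_one[of 1 1] by simp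
  then show ?thesis by (metis B.st_mult B.st_st)
qed

lemma T_one_idem: "T 1 * T 1 = T 1"
  using T_mult_st_T_eq_T_one[of 1 1] st_T_one by simp

lemma T_unitary:
  assumes "A.unitary u"
  shows "T 1 * T u = T u" "T u * T 1 = T u" "norm (T u) \<le> 1"
  using B.partial_isometry_corner[OF st_T_one T_one_idem] assms
  by (simp_all add: A.unitary_def T_mult_st_T_eq_T_one st_T_mult_T_eq_T_one)

lemma T_selfadjoint:
  assumes "stA h = h"
  shows "T 1 * T h = T h" "T h * T 1 = T h" "norm (T h) \<le> 2 * norm h"
proof -
  obtain u where u: "A.unitary u" and h: "h = norm h *\<^sub>R (u + stA u)"
    using A.selfadjoint_eq_norm_scaleR_unitary_sum[OF assms] .
  have Th: "T h = norm h *\<^sub>R (T u + T (stA u))"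
    by (subst h) (simp add: T_scaleR T_add)
  note U = T_unitary[OF u] and V = T_unitary[OF A.unitary_st[OF u]]
  show "T 1 * T h = T h" "T h * T 1 = T h"
    unfolding Th using U V by (simp_all add: distrib_left distrib_right)
  have "norm (T h) \<le> norm h * (norm (T u) + norm (T (stA u)))"
    unfolding Th by (simp add: mult_left_mono norm_triangle_ineq)
  also have "\<dots> \<le> norm h * 2" using U V by (intro mult_left_mono) auto
  finally show "norm (T h) \<le> 2 * norm h" by simp
qed

lemma T_corner: "T 1 * T x = T x" "T x * T 1 = T x"
  and norm_T_le: "norm (T x) \<le> 4 * norm x"
proof -
  obtain h k where hk: "stA h = h" "stA k = k" "x = h + scA \<i> k"
    and norms: "norm h \<le> norm x" "norm k \<le> norm x"
    by (rule A.cartesian_decomposition)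
  have Tx: "T x = T h + scB \<i> (T k)" by (simp add: hk(3) T_add T_sc)
  note H = T_selfadjoint[OF hk(1)] and K = T_selfadjoint[OF hk(2)]
  show "T 1 * T x = T x" unfolding Tx using H K by (simp add: distrib_left flip: B.sc_mult_right)
  show "T x * T 1 = T x" unfolding Tx using H K by (simp add: distrib_right flip: B.sc_mult_left)
  have "norm (T x) \<le> norm (T h) + norm (T k)"
    unfolding Tx using norm_triangle_ineq[of "T h" "scB \<i> (T k)"] by (simp add: B.norm_sc)
  also have "\<dots> \<le> 4 * norm x" using H(3) K(3) norms by simp
  finally show "norm (T x) \<le> 4 * norm x" .
qed

abbreviation T_adj :: "'a \<Rightarrow> 'b" where
  "T_adj x \<equiv> stB (T (stA x))"

lemma T_adj_add: "T_adj (x + y) = T_adj x + T_adj y"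
  by (simp add: A.st_add T_add B.st_add)

lemma T_adj_scaleR: "T_adj (r *\<^sub>R x) = r *\<^sub>R T_adj x"
  by (simp add: A.st_scaleR T_scaleR B.st_scaleR)

lemma T_one_mult_T_adj: "T 1 * T_adj x = T_adj x"
  by (metis B.st_mult T_corner(2) st_T_one)

lemma norm_T_adj_le: "norm (T_adj x) \<le> 4 * norm x"
  using norm_T_le[of "stA x"] by simp

text \<open>Apply the hypothesis to \<open>1 - t x\<close> and \<open>(w\<^sup>*)\<^sup>*\<close>, where \<open>w = 1 + t x + t\<^sup>2 x\<^sup>2 + t\<^sup>3 x\<^sup>3 w\<close>.\<close>
lemma T_adj_expansion:
  assumes w: "(1 - t *\<^sub>R x) * w = 1"
  shows "t *\<^sub>R (T_adj x - T x) + t\<^sup>2 *\<^sub>R (T_adj (x * x) - T x * T_adj x)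
    = t ^ 3 *\<^sub>R (T x * T_adj (x * x) + t *\<^sub>R (T x * T_adj (x ^ 3 * w)) - T_adj (x ^ 3 * w))"
proof -
  define p where "p = T 1"
  define X where "X = T x"
  define S1 where "S1 = T_adj x"
  define S2 where "S2 = T_adj (x * x)"
  define Sq where "Sq = T_adj (x ^ 3 * w)"
  have "w = 1 + t *\<^sub>R x * w" using w by (simp add: algebra_simps)
  then have "w = 1 + t *\<^sub>R x * (1 + t *\<^sub>R x * (1 + t *\<^sub>R x * w))" by simp
  then have "w = 1 + t *\<^sub>R x + (t * t) *\<^sub>R (x * x) + (t * t * t) *\<^sub>R (x ^ 3 * w)"
    by (simp add: algebra_simps power3_eq_cube)
  then have Tw: "T_adj w = p + t *\<^sub>R S1 + (t * t) *\<^sub>R S2 + (t * t * t) *\<^sub>R Sq"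
    by (metis T_adj_add T_adj_scaleR A.st_one st_T_one p_def S1_def S2_def Sq_def)
  have "p = T (1 - t *\<^sub>R x) * T_adj w"
    using T_mult_st_T_eq_T_one[of "1 - t *\<^sub>R x" "stA w"] w by (simp add: p_def)
  also have "\<dots> = (p - t *\<^sub>R X) * (p + t *\<^sub>R S1 + (t * t) *\<^sub>R S2 + (t * t * t) *\<^sub>R Sq)"
    by (simp add: Tw T_diff T_scaleR p_def X_def)
  also have "\<dots> = p + t *\<^sub>R S1 + (t * t) *\<^sub>R S2 + (t * t * t) *\<^sub>R Sq
      - t *\<^sub>R X - (t * t) *\<^sub>R (X * S1) - (t * t * t) *\<^sub>R (X * S2) - (t * t * t * t) *\<^sub>R (X * Sq)"
    using T_one_idem T_one_mult_T_adj T_corner(2)[of x]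
    by (simp add: algebra_simps p_def X_def S1_def S2_def Sq_def)
  finally have "p = p + t *\<^sub>R S1 + (t * t) *\<^sub>R S2 + (t * t * t) *\<^sub>R Sq
      - t *\<^sub>R X - (t * t) *\<^sub>R (X * S1) - (t * t * t) *\<^sub>R (X * S2) - (t * t * t * t) *\<^sub>R (X * Sq)" .
  then show ?thesis
    unfolding Sq_def[symmetric] S2_def[symmetric] S1_def[symmetric] X_def[symmetric]
    by (simp add: power2_eq_square power3_eq_cube algebra_simps)
qed

lemma T_adj_expansion_bound:
  obtains d K where "0 < d"
    "\<And>t. 0 < t \<Longrightarrow> t \<le> d \<Longrightarrow>
      norm (t *\<^sub>R (T_adj x - T x) + t\<^sup>2 *\<^sub>R (T_adj (x * x) - T x * T_adj x)) \<le> K * t ^ 3"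
proof
  define X S2 where "X = T x" and "S2 = T_adj (x * x)"
  have pos: "0 < norm x + 1" using norm_ge_zero[of x] by linarith
  then show "0 < 1 / (2 * (norm x + 1))" by simp
  fix t :: real
  assume t: "0 < t" "t \<le> 1 / (2 * (norm x + 1))"
  have "t * (norm x + 1) \<le> 1 / (2 * (norm x + 1)) * (norm x + 1)"
    using t(2) by (rule mult_right_mono) simp
  also have "\<dots> = 1/2" using pos by simp
  finally have small: "t * norm x + t \<le> 1/2" by (simp add: distrib_left)
  have "0 \<le> t * norm x" using t(1) by simp
  with small have t1: "t \<le> 1" by linarith
  have ty: "norm (t *\<^sub>R x) \<le> 1/2" using small t(1) by simp
  define w where "w = (\<Sum>n. (t *\<^sub>R x) ^ n)"
  have inv: "(1 - t *\<^sub>R x) * w = 1"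
    unfolding w_def by (rule geometric_series_right_inverse[OF A.norm_one_le]) (use ty in simp)
  have "norm w \<le> 1 / (1 - norm (t *\<^sub>R x))"
    unfolding w_def by (rule norm_geometric_series_le[OF A.norm_one_le]) (use ty in simp)
  also have "\<dots> \<le> 2" using ty by (simp add: field_simps)
  finally have "norm w \<le> 2" .
  define Sq where "Sq = T_adj (x ^ 3 * w)"
  have "norm (x ^ 3 * w) \<le> norm (x ^ 3) * norm w" by (rule norm_mult_ineq)
  also have "\<dots> \<le> norm x ^ 3 * 2"
    using \<open>norm w \<le> 2\<close> norm_power_le_of_norm_one_le[OF A.norm_one_le] by (intro mult_mono) auto
  finally have nSq: "norm Sq \<le> 8 * norm x ^ 3"
    using norm_T_adj_le[of "x ^ 3 * w"] by (simp add: Sq_def)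
  have "norm (t *\<^sub>R (X * Sq)) = t * norm (X * Sq)" using t(1) by simp
  also have "\<dots> \<le> 1 * (norm X * norm Sq)"
    using t1 t(1) norm_mult_ineq[of X Sq] by (intro mult_mono) auto
  also have "\<dots> \<le> norm X * (8 * norm x ^ 3)" using nSq by (simp add: mult_left_mono)
  finally have "norm (X * S2 + t *\<^sub>R (X * Sq) - Sq) \<le> norm X * norm S2 + norm X * (8 * norm x ^ 3) + 8 * norm x ^ 3"
    using norm_triangle_ineq4[of "X * S2 + t *\<^sub>R (X * Sq)" Sq]
      norm_triangle_ineq[of "X * S2" "t *\<^sub>R (X * Sq)"] norm_mult_ineq[of X S2] nSq
    by linarith
  then show "norm (t *\<^sub>R (T_adj x - T x) + t\<^sup>2 *\<^sub>R (T_adj (x * x) - T x * T_adj x))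
      \<le> (norm X * norm S2 + norm X * (8 * norm x ^ 3) + 8 * norm x ^ 3) * t ^ 3"
    unfolding T_adj_expansion[OF inv] unfolding X_def[symmetric] S2_def[symmetric] Sq_def[symmetric]
    using t(1) by (simp add: mult.commute mult_left_mono)
qed

lemma T_adj_eq_T: "T_adj x = T x"
  and T_adj_square: "T_adj (x * x) = T x * T_adj x"
proof -
  obtain d K where "0 < d"
    "\<And>t. 0 < t \<Longrightarrow> t \<le> d \<Longrightarrow>
      norm (t *\<^sub>R (T_adj x - T x) + t\<^sup>2 *\<^sub>R (T_adj (x * x) - T x * T_adj x)) \<le> K * t ^ 3"
    by (rule T_adj_expansion_bound[of x]) blast
  from coefficients_eq_zero_of_cubic_bound[OF this]
  show "T_adj x = T x" "T_adj (x * x) = T x * T_adj x" by simp_all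
qed

lemma T_st: "T (stA x) = stB (T x)"
  using T_adj_eq_T[of x] by (metis B.st_st)

lemma T_square: "T (x * x) = T x * T x"
  using T_adj_square[of x] by (simp add: T_adj_eq_T)

lemma T_jordan: "T (a * b + b * a) = T a * T b + T b * T a"
proof -
  have "T (a * a) + T (a * b + b * a) + T (b * b) = T a * T a + (T a * T b + T b * T a) + T b * T b"
    using T_square[of "a + b"] by (simp add: T_add distrib_left distrib_right add_ac)
  then show ?thesis by (simp add: T_square)
qed

end

theorem theorem2p5:
  fixes scA :: "complex \<Rightarrow> 'a::{real_normed_algebra,ring_1,banach} \<Rightarrow> 'a"
    and stA :: "'a \<Rightarrow> 'a"
    and scB :: "complex \<Rightarrow> 'b::{real_normed_algebra,banach} \<Rightarrow> 'b"
    and stB :: "'b \<Rightarrow> 'b"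
    and T :: "'a \<Rightarrow> 'b"
  assumes "cstar_algebra scA stA"
    and "cstar_algebra scB stB"
    and "clinear_map scA scB T"
    and "star_hom_at stA stB T 1"
  shows "jordan_star_hom scA stA scB stB T"
proof -
  interpret star_hom_at_one scA stA scB stB T
    using assms by unfold_locales
  show ?thesis
    unfolding jordan_star_hom_def jordan_prod_def
    using assms(3) by (simp add: T_scaleR T_jordan T_st)
qed

end
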